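(* Let $L$ be a multisorted algebra in the quantifier-free signature satisfying axioms (1), (2), (3), (5), (6), and let $F$ be a prime filter on sort $n$ of $L$. Let $F_1,\dots,F_n$ be distinct symbols and $W=\{F_1,\dots,F_n\}$. Define $\varphi\colon L\to A(W)$ on each sort $k$ by: for each substitution $\alpha\colon k\to n$, $\alpha^{\mathrm{tuple}}(F_1,\dots,F_n)\in\varphi(r)$ if and only if $\alpha(r)\in F$. Then $\varphi$ is a morphism of quantifier-free algebras.
   Context: Signature. There is a sort $n$ for each natural number $n\ge 0$. For every function $\alpha\colon\{1,\dots,n\}\to\{1,\dots,k\}$ there is a unary function symbol ("substitution") $\alpha\colon n\to k$ (argument of sort $n$, value of sort $k$). For each sort there are constants $0,1$, binary operations $\vee,\wedge$, and unary $\neg$ (the quantifier-free signature). For substitutions $\alpha\colon k\to n$, $\beta\colon n\to m$, $\beta\circ\alpha\colon k\to m$ is the substitution symbol of the composite function. For a set $W$: $\alpha^{\mathrm{tuple}}(x_1,\dots,x_k)=(x_{\alpha(1)},\dots,x_{\alpha(n)})$, $\alpha^{\mathrm{relation}}(r)=\{\bar x\in W^k:\alpha^{\mathrm{tuple}}(\bar x)\in r\}$. The quantifier-free algebra $A(W)$ interprets sort $n$ as $\mathcal P(W^n)$, $\alpha$ as $\alpha^{\mathrm{relation}}$, and $0,1,\vee,\wedge,\neg$ as $\emptyset,W^n,\cup,\cap$, complement. Since the $F_i$ are distinct, every tuple from $W$ of length $k$ equals $\alpha^{\mathrm{tuple}}(F_1,\dots,F_n)$ for exactly one substitution $\alpha\colon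 k\to n$. Axioms: (1) each sort is a bounded distributive lattice under $0,1,\vee,\wedge$; (2) substitutions preserve $0,1,\vee,\wedge$; (3) $(\beta\circ\alpha)(r)=\beta(\alpha(r))$; (5) $\alpha(\neg r)=\neg\alpha(r)$; (6) $r\vee\neg r=1$, $r\wedge\neg r=0$. A prime filter is a proper, nonempty, upward-closed, $\wedge$-closed subset of a sort such that $x\vee y\in F$ implies $x\in F$ or $y\in F$. *)

theory Defs
  imports "HOL-Library.FuncSet"
begin

text \<open>A substitution symbol alpha : n -> k (argument of sort n,
  value of sort k) is given by a function alpha : {1..n} -> {1..k}, represented
  extensionally as an element of {1..n} ->E {1..k}; it is interpreted by sub n k alpha.\<close>

record 'a qf_alg =
  car  :: "nat \<Rightarrow> 'a set"
  zero :: "nat \<Rightarrow> 'a"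
  one  :: "nat \<Rightarrow> 'a"
  join :: "nat \<Rightarrow> 'a \<Rightarrow> 'a \<Rightarrow> 'a"
  meet :: "nat \<Rightarrow> 'a \<Rightarrow> 'a \<Rightarrow> 'a"
  neg  :: "nat \<Rightarrow> 'a \<Rightarrow> 'a"
  sub  :: "nat \<Rightarrow> nat \<Rightarrow> (nat \<Rightarrow> nat) \<Rightarrow> 'a \<Rightarrow> 'a"

definition subst_fun :: "nat \<Rightarrow> nat \<Rightarrow> (nat \<Rightarrow> nat) set" where
  "subst_fun n k = {1..n} \<rightarrow>\<^sub>E {1..k}"

definition qf_closed :: "'a qf_alg \<Rightarrow> bool" where
  "qf_closed L \<longleftrightarrow>
     (\<forall>k. zero L k \<in> car L k \<and> one L k \<in> car L k) \<and>
     (\<forall>k. \<forall>x\<in>car L k. \<forall>y\<in>car L k. join L k x y \<in> car L k \<and> meet L k x y \<in> car L k) \<and>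
     (\<forall>k. \<forall>x\<in>car L k. neg L k x \<in> car L k) \<and>
     (\<forall>n k \<alpha>. \<alpha> \<in> subst_fun n k \<longrightarrow> (\<forall>r\<in>car L n. sub L n k \<alpha> r \<in> car L k))"

definition ax1 :: "'a qf_alg \<Rightarrow> bool" where
  "ax1 L \<longleftrightarrow> (\<forall>k. \<forall>x\<in>car L k. \<forall>y\<in>car L k. \<forall>z\<in>car L k.
      join L k (join L k x y) z = join L k x (join L k y z) \<and>
      meet L k (meet L k x y) z = meet L k x (meet L k y z) \<and>
      join L k x y = join L k y x \<and>
      meet L k x y = meet L k y x \<and>
      join L k x (meet L k x y) = x \<and>
      meet L k x (join L k x y) = x \<and>
      meet L k x (join L k y z) = join L k (meet L k x y) (meet L k x z) \<and>
      join L k x (zero L k) = x \<and>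
      meet L k x (one L k) = x)"

definition ax2 :: "'a qf_alg \<Rightarrow> bool" where
  "ax2 L \<longleftrightarrow> (\<forall>n k \<alpha>. \<alpha> \<in> subst_fun n k \<longrightarrow>
      sub L n k \<alpha> (zero L n) = zero L k \<and>
      sub L n k \<alpha> (one L n) = one L k \<and>
      (\<forall>x\<in>car L n. \<forall>y\<in>car L n.
         sub L n k \<alpha> (join L n x y) = join L k (sub L n k \<alpha> x) (sub L n k \<alpha> y) \<and>
         sub L n k \<alpha> (meet L n x y) = meet L k (sub L n k \<alpha> x) (sub L n k \<alpha> y)))"

definition ax3 :: "'a qf_alg \<Rightarrow> bool" where
  "ax3 L \<longleftrightarrow> (\<forall>k n m \<alpha> \<beta>. \<alpha> \<in> subst_fun k n \<longrightarrow> \<beta> \<in> subst_fun n m \<longrightarrow>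
      (\<forall>r\<in>car L k. sub L k m (compose {1..k} \<beta> \<alpha>) r = sub L n m \<beta> (sub L k n \<alpha> r)))"

definition ax5 :: "'a qf_alg \<Rightarrow> bool" where
  "ax5 L \<longleftrightarrow> (\<forall>n k \<alpha>. \<alpha> \<in> subst_fun n k \<longrightarrow>
      (\<forall>r\<in>car L n. sub L n k \<alpha> (neg L n r) = neg L k (sub L n k \<alpha> r)))"

definition ax6 :: "'a qf_alg \<Rightarrow> bool" where
  "ax6 L \<longleftrightarrow> (\<forall>k. \<forall>r\<in>car L k.
      join L k r (neg L k r) = one L k \<and> meet L k r (neg L k r) = zero L k)"

text \<open>Prime filter on sort n (order: x <= y iff meet x y = x).\<close>
definition prime_filter :: "'a qf_alg \<Rightarrow> nat \<Rightarrow> 'a set \<Rightarrow> bool" where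
  "prime_filter L n P \<longleftrightarrow>
     P \<subseteq> car L n \<and> P \<noteq> car L n \<and> P \<noteq> {} \<and>
     (\<forall>x\<in>P. \<forall>y\<in>car L n. meet L n x y = x \<longrightarrow> y \<in> P) \<and>
     (\<forall>x\<in>P. \<forall>y\<in>P. meet L n x y \<in> P) \<and>
     (\<forall>x\<in>car L n. \<forall>y\<in>car L n. join L n x y \<in> P \<longrightarrow> x \<in> P \<or> y \<in> P)"

definition tuples :: "'w set \<Rightarrow> nat \<Rightarrow> (nat \<Rightarrow> 'w) set" where
  "tuples W n = {1..n} \<rightarrow>\<^sub>E W"

definition tuple_sub :: "nat \<Rightarrow> (nat \<Rightarrow> nat) \<Rightarrow> (nat \<Rightarrow> 'w) \<Rightarrow> (nat \<Rightarrow> 'w)" where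
  "tuple_sub n \<alpha> x = (\<lambda>i\<in>{1..n}. x (\<alpha> i))"

definition A_alg :: "'w set \<Rightarrow> (nat \<Rightarrow> 'w) set qf_alg" where
  "A_alg W = \<lparr> car = (\<lambda>n. Pow (tuples W n)),
               zero = (\<lambda>n. {}),
               one = (\<lambda>n. tuples W n),
               join = (\<lambda>n r s. r \<union> s),
               meet = (\<lambda>n r s. r \<inter> s),
               neg = (\<lambda>n r. tuples W n - r),
               sub = (\<lambda>n k \<alpha> r. {x \<in> tuples W k. tuple_sub n \<alpha> x \<in> r}) \<rparr>"

definition qf_morphism :: "'a qf_alg \<Rightarrow> 'b qf_alg \<Rightarrow> (nat \<Rightarrow> 'a \<Rightarrow> 'b) \<Rightarrow> bool" where
  "qf_morphism L M \<phi> \<longleftrightarrow>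
     (\<forall>k. \<forall>r\<in>car L k. \<phi> k r \<in> car M k) \<and>
     (\<forall>k. \<phi> k (zero L k) = zero M k \<and> \<phi> k (one L k) = one M k) \<and>
     (\<forall>k. \<forall>x\<in>car L k. \<forall>y\<in>car L k.
         \<phi> k (join L k x y) = join M k (\<phi> k x) (\<phi> k y) \<and>
         \<phi> k (meet L k x y) = meet M k (\<phi> k x) (\<phi> k y)) \<and>
     (\<forall>k. \<forall>x\<in>car L k. \<phi> k (neg L k x) = neg M k (\<phi> k x)) \<and>
     (\<forall>n k \<alpha>. \<alpha> \<in> subst_fun n k \<longrightarrow>
         (\<forall>r\<in>car L n. \<phi> k (sub L n k \<alpha> r) = sub M n k \<alpha> (\<phi> n r)))"

text \<open>Since every k-tuple from W is alpha^tuple(F_1..F_n) for exactly one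
  alpha, phi(r) is the set of those tuples for which alpha(r) in P.\<close>
definition phi_map :: "'a qf_alg \<Rightarrow> nat \<Rightarrow> 'a set \<Rightarrow> (nat \<Rightarrow> 'w) \<Rightarrow> nat \<Rightarrow> 'a \<Rightarrow> (nat \<Rightarrow> 'w) set" where
  "phi_map L n P F k r =
     (\<lambda>\<alpha>. tuple_sub k \<alpha> F) ` {\<alpha> \<in> subst_fun k n. sub L k n \<alpha> r \<in> P}"

end

theory Submission
  imports Defs
begin

text \<open>Encoding a substitution \<open>\<beta> : k \<rightarrow> n\<close> by the tuple \<open>\<beta>\<^sup>tuple(F\<^sub>1,\<dots>,F\<^sub>n)\<close> is a bijection
  onto the \<open>k\<close>-tuples over \<open>W\<close>, and it turns the action of substitutions on tuples into
  composition. Hence \<open>\<phi>(r)\<close> is just a relabelling of the set of substitutions \<open>\<beta>\<close> with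
  \<open>\<beta>(r) \<in> P\<close> (the prime filter is called \<open>P\<close> here), and every clause of the morphism property
  reduces to a property of \<open>P\<close>: primality handles \<open>\<or>\<close>, the filter axioms \<open>\<and>\<close>, \<open>0\<close> and \<open>1\<close>, the complement laws \<open>\<not>\<close>,
  and axioms (2), (3), (5) move the substitution past the operation.\<close>

lemma inj_on_tuple_sub:
  assumes "inj_on F {1..n}"
  shows "inj_on (\<lambda>\<beta>. tuple_sub k \<beta> F) (subst_fun k n)"
proof (rule inj_onI)
  fix \<beta> \<gamma> assume \<beta>: "\<beta> \<in> subst_fun k n" and \<gamma>: "\<gamma> \<in> subst_fun k n"
    and eq: "tuple_sub k \<beta> F = tuple_sub k \<gamma> F"
  have "\<beta> i = \<gamma> i" if i: "i \<in> {1..k}" for i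
  proof -
    have "F (\<beta> i) = F (\<gamma> i)" using fun_cong[OF eq, of i] i by (simp add: tuple_sub_def)
    moreover have "\<beta> i \<in> {1..n}" "\<gamma> i \<in> {1..n}" using \<beta> \<gamma> i by (auto simp: subst_fun_def)
    ultimately show ?thesis using assms by (meson inj_onD)
  qed
  with \<beta> \<gamma> show "\<beta> = \<gamma>" unfolding subst_fun_def by (rule PiE_ext)
qed

lemma tuple_sub_image_subst_fun:
  assumes "inj_on F {1..n}"
  shows "(\<lambda>\<beta>. tuple_sub k \<beta> F) ` subst_fun k n = tuples (F ` {1..n}) k"
proof
  show "(\<lambda>\<beta>. tuple_sub k \<beta> F) ` subst_fun k n \<subseteq> tuples (F ` {1..n}) k"
    by (auto simp: subst_fun_def tuples_def tuple_sub_def)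
next
  show "tuples (F ` {1..n}) k \<subseteq> (\<lambda>\<beta>. tuple_sub k \<beta> F) ` subst_fun k n"
  proof
    fix x assume x: "x \<in> tuples (F ` {1..n}) k"
    define \<beta> where "\<beta> = (\<lambda>i\<in>{1..k}. inv_into {1..n} F (x i))"
    have x_in: "x i \<in> F ` {1..n}" if "i \<in> {1..k}" for i
      using x that unfolding tuples_def by blast
    then have "\<beta> \<in> subst_fun k n"
      unfolding \<beta>_def subst_fun_def restrict_PiE_iff by (blast intro: inv_into_into)
    moreover have "x = tuple_sub k \<beta> F"
    proof -
      have "x = (\<lambda>i\<in>{1..k}. x i)"
        using x by (simp add: tuples_def PiE_iff extensional_restrict)
      also have "\<dots> = tuple_sub k \<beta> F"
        unfolding tuple_sub_def \<beta>_def by (rule restrict_ext) (use x_in in \<open>auto simp: f_inv_into_f\<close>)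
      finally show ?thesis .
    qed
    ultimately show "x \<in> (\<lambda>\<beta>. tuple_sub k \<beta> F) ` subst_fun k n" by blast
  qed
qed

lemma compose_in_subst_fun:
  assumes "\<alpha> \<in> subst_fun m k" and "\<beta> \<in> subst_fun k n"
  shows "compose {1..m} \<beta> \<alpha> \<in> subst_fun m n"
  using assms by (auto simp: subst_fun_def compose_def)

lemma tuple_sub_tuple_sub:
  assumes "\<alpha> \<in> subst_fun m k"
  shows "tuple_sub m \<alpha> (tuple_sub k \<beta> x) = tuple_sub m (compose {1..m} \<beta> \<alpha>) x"
  using assms unfolding tuple_sub_def compose_def subst_fun_def
  by (intro restrict_ext) auto

lemma ax1D:
  assumes "ax1 L" "x \<in> car L k" "y \<in> car L k" "z \<in> car L k"
  shows "join L k x y = join L k y x"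
    and "meet L k x y = meet L k y x"
    and "meet L k (meet L k x y) z = meet L k x (meet L k y z)"
    and "join L k x (meet L k x y) = x"
    and "meet L k x (join L k x y) = x"
    and "join L k x (zero L k) = x"
    and "meet L k x (one L k) = x"
  using assms unfolding ax1_def by blast+

lemma qf_closedD:
  assumes "qf_closed L"
  shows "zero L k \<in> car L k" and "one L k \<in> car L k"
    and "x \<in> car L k \<Longrightarrow> y \<in> car L k \<Longrightarrow> join L k x y \<in> car L k"
    and "x \<in> car L k \<Longrightarrow> y \<in> car L k \<Longrightarrow> meet L k x y \<in> car L k"
    and "x \<in> car L k \<Longrightarrow> neg L k x \<in> car L k"
    and "\<alpha> \<in> subst_fun m k \<Longrightarrow> r \<in> car L m \<Longrightarrow> sub L m k \<alpha> r \<in> car L k"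
  using assms unfolding qf_closed_def by blast+

lemma meet_idem:
  assumes "qf_closed L" "ax1 L" "x \<in> car L k"
  shows "meet L k x x = x"
proof -
  have xx: "meet L k x x \<in> car L k" by (rule qf_closedD(4)[OF assms(1,3,3)])
  have "meet L k x x = meet L k x (join L k x (meet L k x x))"
    using ax1D(4)[OF assms(2,3,3,3)] by simp
  also have "\<dots> = x" by (rule ax1D(5)[OF assms(2,3) xx xx])
  finally show ?thesis .
qed

lemma meet_absorb_left:
  assumes "qf_closed L" "ax1 L" "x \<in> car L k" "y \<in> car L k"
  shows "meet L k (meet L k x y) x = meet L k x y"
proof -
  have "meet L k (meet L k x y) x = meet L k x (meet L k y x)"
    by (rule ax1D(3)[OF assms(2,3,4,3)])
  also have "\<dots> = meet L k x (meet L k x y)"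
    using ax1D(2)[OF assms(2,4,3,3)] by simp
  also have "\<dots> = meet L k (meet L k x x) y"
    by (rule ax1D(3)[OF assms(2,3,3,4), symmetric])
  finally show ?thesis using meet_idem[OF assms(1-3)] by simp
qed

lemma meet_zero_left:
  assumes "qf_closed L" "ax1 L" "y \<in> car L k"
  shows "meet L k (zero L k) y = zero L k"
proof -
  have zero: "zero L k \<in> car L k" by (rule qf_closedD(1)[OF assms(1)])
  have "join L k (zero L k) y = y"
    using ax1D(1)[OF assms(2) zero assms(3,3)] ax1D(6)[OF assms(2,3,3,3)] by simp
  then show ?thesis using ax1D(5)[OF assms(2) zero assms(3,3)] by simp
qed

lemma prime_filterD:
  assumes "prime_filter L n P"
  shows "P \<subseteq> car L n" and "P \<noteq> car L n" and "P \<noteq> {}"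
    and "x \<in> P \<Longrightarrow> y \<in> car L n \<Longrightarrow> meet L n x y = x \<Longrightarrow> y \<in> P"
    and "x \<in> P \<Longrightarrow> y \<in> P \<Longrightarrow> meet L n x y \<in> P"
    and "x \<in> car L n \<Longrightarrow> y \<in> car L n \<Longrightarrow> join L n x y \<in> P \<Longrightarrow> x \<in> P \<or> y \<in> P"
  using assms unfolding prime_filter_def by blast+

lemma prime_filter_zero_notin:
  assumes "qf_closed L" "ax1 L" "prime_filter L n P"
  shows "zero L n \<notin> P"
proof
  assume zero: "zero L n \<in> P"
  have "y \<in> P" if "y \<in> car L n" for y
    using prime_filterD(4)[OF assms(3) zero that meet_zero_left[OF assms(1,2) that]] .
  then have "P = car L n" using prime_filterD(1)[OF assms(3)] by blast
  with prime_filterD(2)[OF assms(3)] show False ..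
qed

lemma prime_filter_one_in:
  assumes "qf_closed L" "ax1 L" "prime_filter L n P"
  shows "one L n \<in> P"
proof -
  have one: "one L n \<in> car L n" by (rule qf_closedD(2)[OF assms(1)])
  obtain x where x: "x \<in> P" using prime_filterD(3)[OF assms(3)] by blast
  then have "x \<in> car L n" using prime_filterD(1)[OF assms(3)] by blast
  then have "meet L n x (one L n) = x" using ax1D(7)[OF assms(2) _ one one] by blast
  then show ?thesis using prime_filterD(4)[OF assms(3) x one] by blast
qed

lemma prime_filter_join_iff:
  assumes "qf_closed L" "ax1 L" "prime_filter L n P" "x \<in> car L n" "y \<in> car L n"
  shows "join L n x y \<in> P \<longleftrightarrow> x \<in> P \<or> y \<in> P"
proof
  show "join L n x y \<in> P \<Longrightarrow> x \<in> P \<or> y \<in> P"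
    by (rule prime_filterD(6)[OF assms(3-5)])
next
  have xy: "join L n x y \<in> car L n" by (rule qf_closedD(3)[OF assms(1,4,5)])
  have "meet L n x (join L n x y) = x" by (rule ax1D(5)[OF assms(2,4,5,5)])
  moreover have "meet L n y (join L n x y) = y"
    using ax1D(1)[OF assms(2,4,5,5)] ax1D(5)[OF assms(2,5,4,4)] by simp
  ultimately show "x \<in> P \<or> y \<in> P \<Longrightarrow> join L n x y \<in> P"
    using prime_filterD(4)[OF assms(3) _ xy] by blast
qed

lemma prime_filter_meet_iff:
  assumes "qf_closed L" "ax1 L" "prime_filter L n P" "x \<in> car L n" "y \<in> car L n"
  shows "meet L n x y \<in> P \<longleftrightarrow> x \<in> P \<and> y \<in> P"
proof
  show "x \<in> P \<and> y \<in> P \<Longrightarrow> meet L n x y \<in> P"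
    using prime_filterD(5)[OF assms(3)] by blast
next
  have "meet L n (meet L n x y) x = meet L n x y"
    by (rule meet_absorb_left[OF assms(1,2,4,5)])
  moreover have "meet L n (meet L n x y) y = meet L n x y"
    using meet_absorb_left[OF assms(1,2,5,4)] ax1D(2)[OF assms(2,4,5,5)] by simp
  ultimately show "meet L n x y \<in> P \<Longrightarrow> x \<in> P \<and> y \<in> P"
    using prime_filterD(4)[OF assms(3)] assms(4,5) by blast
qed

lemma prime_filter_neg_iff:
  assumes "qf_closed L" "ax1 L" "ax6 L" "prime_filter L n P" "x \<in> car L n"
  shows "neg L n x \<in> P \<longleftrightarrow> x \<notin> P"
proof -
  have nx: "neg L n x \<in> car L n" by (rule qf_closedD(5)[OF assms(1,5)])
  have "join L n x (neg L n x) = one L n" "meet L n x (neg L n x) = zero L n"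
    using assms(3,5) unfolding ax6_def by blast+
  then show ?thesis
    using prime_filter_join_iff[OF assms(1,2,4,5) nx] prime_filter_meet_iff[OF assms(1,2,4,5) nx]
      prime_filter_one_in[OF assms(1,2,4)] prime_filter_zero_notin[OF assms(1,2,4)]
    by auto
qed

locale prime_filter_representation =
  fixes L :: "'a qf_alg" and n :: nat and P :: "'a set" and F :: "nat \<Rightarrow> 'w"
  assumes closed: "qf_closed L" and ax1: "ax1 L" and ax2: "ax2 L" and ax3: "ax3 L"
    and ax5: "ax5 L" and ax6: "ax6 L"
    and prime: "prime_filter L n P"
    and inj: "inj_on F {1..n}"
begin

abbreviation W :: "'w set" where "W \<equiv> F ` {1..n}"

abbreviation \<phi> :: "nat \<Rightarrow> 'a \<Rightarrow> (nat \<Rightarrow> 'w) set" where "\<phi> \<equiv> phi_map L n P F"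

lemma tuples_obtain_subst:
  assumes "x \<in> tuples W k"
  obtains \<beta> where "\<beta> \<in> subst_fun k n" and "x = tuple_sub k \<beta> F"
  using assms tuple_sub_image_subst_fun[OF inj, of k] by blast

lemma tuple_sub_in_tuples: "\<beta> \<in> subst_fun k n \<Longrightarrow> tuple_sub k \<beta> F \<in> tuples W k"
  using tuple_sub_image_subst_fun[OF inj, of k] by blast

lemma phi_subset_tuples: "\<phi> k r \<subseteq> tuples W k"
  unfolding phi_map_def using tuple_sub_in_tuples by blast

lemma tuple_sub_in_phi_iff:
  assumes "\<beta> \<in> subst_fun k n"
  shows "tuple_sub k \<beta> F \<in> \<phi> k r \<longleftrightarrow> sub L k n \<beta> r \<in> P"
  using assms inj_onD[OF inj_on_tuple_sub[OF inj, of k]] unfolding phi_map_def by blast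

lemma phi_eqI:
  assumes "X \<subseteq> tuples W k"
    and "\<And>\<beta>. \<beta> \<in> subst_fun k n \<Longrightarrow> tuple_sub k \<beta> F \<in> X \<longleftrightarrow> sub L k n \<beta> r \<in> P"
  shows "\<phi> k r = X"
proof (intro subset_antisym subsetI)
  fix x assume x: "x \<in> \<phi> k r"
  then obtain \<beta> where "\<beta> \<in> subst_fun k n" "x = tuple_sub k \<beta> F"
    using phi_subset_tuples tuples_obtain_subst by blast
  with x show "x \<in> X" using assms(2) tuple_sub_in_phi_iff by blast
next
  fix x assume x: "x \<in> X"
  then obtain \<beta> where "\<beta> \<in> subst_fun k n" "x = tuple_sub k \<beta> F"
    using assms(1) tuples_obtain_subst by blast
  with x show "x \<in> \<phi> k r" using assms(2) tuple_sub_in_phi_iff by blast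
qed

lemma phi_zero: "\<phi> k (zero L k) = {}"
  using ax2 prime_filter_zero_notin[OF closed ax1 prime]
  by (intro phi_eqI) (auto simp: ax2_def)

lemma phi_one: "\<phi> k (one L k) = tuples W k"
  using ax2 prime_filter_one_in[OF closed ax1 prime] tuple_sub_in_tuples
  by (intro phi_eqI) (auto simp: ax2_def)

lemma phi_join:
  assumes "x \<in> car L k" "y \<in> car L k"
  shows "\<phi> k (join L k x y) = \<phi> k x \<union> \<phi> k y"
proof (rule phi_eqI)
  show "\<phi> k x \<union> \<phi> k y \<subseteq> tuples W k" using phi_subset_tuples by blast
  fix \<beta> assume \<beta>: "\<beta> \<in> subst_fun k n"
  then have "sub L k n \<beta> (join L k x y) = join L n (sub L k n \<beta> x) (sub L k n \<beta> y)"
    using ax2 assms unfolding ax2_def by blast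
  then show "tuple_sub k \<beta> F \<in> \<phi> k x \<union> \<phi> k y \<longleftrightarrow> sub L k n \<beta> (join L k x y) \<in> P"
    using prime_filter_join_iff[OF closed ax1 prime] qf_closedD(6)[OF closed] tuple_sub_in_phi_iff
      \<beta> assms
    by simp
qed

lemma phi_meet:
  assumes "x \<in> car L k" "y \<in> car L k"
  shows "\<phi> k (meet L k x y) = \<phi> k x \<inter> \<phi> k y"
proof (rule phi_eqI)
  show "\<phi> k x \<inter> \<phi> k y \<subseteq> tuples W k" using phi_subset_tuples by blast
  fix \<beta> assume \<beta>: "\<beta> \<in> subst_fun k n"
  then have "sub L k n \<beta> (meet L k x y) = meet L n (sub L k n \<beta> x) (sub L k n \<beta> y)"
    using ax2 assms unfolding ax2_def by blast
  then show "tuple_sub k \<beta> F \<in> \<phi> k x \<inter> \<phi> k y \<longleftrightarrow> sub L k n \<beta> (meet L k x y) \<in> P"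
    using prime_filter_meet_iff[OF closed ax1 prime] qf_closedD(6)[OF closed] tuple_sub_in_phi_iff
      \<beta> assms
    by simp
qed

lemma phi_neg:
  assumes "x \<in> car L k"
  shows "\<phi> k (neg L k x) = tuples W k - \<phi> k x"
proof (rule phi_eqI)
  show "tuples W k - \<phi> k x \<subseteq> tuples W k" by blast
  fix \<beta> assume \<beta>: "\<beta> \<in> subst_fun k n"
  then have "sub L k n \<beta> (neg L k x) = neg L n (sub L k n \<beta> x)"
    using ax5 assms unfolding ax5_def by blast
  then show "tuple_sub k \<beta> F \<in> tuples W k - \<phi> k x \<longleftrightarrow> sub L k n \<beta> (neg L k x) \<in> P"
    using prime_filter_neg_iff[OF closed ax1 ax6 prime] qf_closedD(6)[OF closed] tuple_sub_in_phi_iff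
      tuple_sub_in_tuples \<beta> assms
    by simp
qed

lemma phi_sub:
  assumes \<alpha>: "\<alpha> \<in> subst_fun m k" and r: "r \<in> car L m"
  shows "\<phi> k (sub L m k \<alpha> r) = {x \<in> tuples W k. tuple_sub m \<alpha> x \<in> \<phi> m r}"
proof (rule phi_eqI)
  fix \<beta> assume \<beta>: "\<beta> \<in> subst_fun k n"
  have "tuple_sub m \<alpha> (tuple_sub k \<beta> F) \<in> \<phi> m r \<longleftrightarrow> sub L m n (compose {1..m} \<beta> \<alpha>) r \<in> P"
    unfolding tuple_sub_tuple_sub[OF \<alpha>]
    by (rule tuple_sub_in_phi_iff[OF compose_in_subst_fun[OF \<alpha> \<beta>]])
  also have "\<dots> \<longleftrightarrow> sub L k n \<beta> (sub L m k \<alpha> r) \<in> P"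
    using ax3 \<alpha> \<beta> r unfolding ax3_def by simp
  finally show "tuple_sub k \<beta> F \<in> {x \<in> tuples W k. tuple_sub m \<alpha> x \<in> \<phi> m r}
      \<longleftrightarrow> sub L k n \<beta> (sub L m k \<alpha> r) \<in> P"
    using tuple_sub_in_tuples[OF \<beta>] by simp
qed auto

end

theorem lemma4p2:
  fixes L :: "'a qf_alg" and n :: nat and P :: "'a set" and F :: "nat \<Rightarrow> 'w"
  assumes "qf_closed L" and "ax1 L" and "ax2 L" and "ax3 L" and "ax5 L" and "ax6 L"
    and "prime_filter L n P"
    and "inj_on F {1..n}"
  shows "qf_morphism L (A_alg (F ` {1..n})) (phi_map L n P F)"
proof -
  interpret prime_filter_representation L n P F
    using assms by unfold_locales
  show ?thesis
    unfolding qf_morphism_def A_alg_def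
    using phi_subset_tuples phi_zero phi_one phi_join phi_meet phi_neg phi_sub by simp
qed

end
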